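(* In the setting described in the context, let $\mathbf{v}:\mathcal{K}(\mathbb{R}^n)\to\mathbb{R}$ satisfy $\mathbf{v}(X)=\Psi(X)+\mathbf{v}(F(X))$ for all $X\in\mathcal{K}(\mathbb{R}^n)$, be finite on $\mathcal{K}_{\mathcal{D}_{\mathcal{A}}}(\mathbb{R}^n)$, and satisfy $\lim_{k\to\infty}\mathbf{v}(\mathcal{R}(X,k))=0$ for every $X\in\mathcal{K}_{\mathcal{D}_{\mathcal{A}}}(\mathbb{R}^n)$. Then $\mathbf{v}(X)=\mathcal{V}(X)$ for all $X\in\mathcal{K}_{\mathcal{D}_{\mathcal{A}}}(\mathbb{R}^n)$.
   Context: Let $\|\cdot\|$ be a norm on $\mathbb{R}^n$ and $\mathrm{dist}(x,\Omega):=\inf_{y\in\Omega}\|x-y\|$. Let $\mathcal{K}(\mathbb{R}^n)$ denote the nonempty compact subsets of $\mathbb{R}^n$. Consider $x_{k+1}=f(x_k,u_k)$ with $f:\mathbb{R}^n\times\mathbb{R}^m\to\mathbb{R}^n$ continuous and inputs $u_k\in U$, $U\subset\mathbb{R}^m$ nonempty compact. Define $F(X):=\{f(x,u):x\in X,u\in U\}$. For $x\in\mathbb{R}^n$ and $\pi:\mathbb{Z}_+\to U$, $\varphi_x^\pi(0)=x$, $\varphi_x^\pi(k+1)=f(\varphi_x^\pi(k),\pi(k))$; $\mathcal{R}(X,k):=\{\varphi_x^\pi(k):x\in X,\pi\in U^{\mathbb{Z}_+}\}$. Let $\mathcal{A}\in\mathcal{K}(\mathbb{R}^n)$ be controlled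 invariant. Assume local $\ell_p$-stabilizability: there exist $r>0$, $M\ge1$, $p>0$, $\lambda:[0,r]\times\mathbb{Z}_+\to\mathbb{R}_+$ such that (1) for each $k$, $s\mapsto\lambda(s,k)$ is continuous, nondecreasing, $\lambda(0,k)=0$; for each $s$, $k\mapsto\lambda(s,k)$ is nonincreasing, $\lambda(s,0)\le s$; (2) $\sum_{k}\lambda(r,k)^p<\infty$; (3) for every $x$ with $\mathrm{dist}(x,\mathcal{A})\le r$ there is $\pi\in U^{\mathbb{Z}_+}$ with $\mathrm{dist}(\varphi_x^\pi(k),\mathcal{A})\le M\lambda(\mathrm{dist}(x,\mathcal{A}),k)$ for all $k$. Let $\mathcal{D}_{\mathcal{A}}:=\{x:\exists\pi\in U^{\mathbb{Z}_+},\ \lim_{k\to\infty}\mathrm{dist}(\varphi_x^\pi(k),\mathcal{A})=0\}$ and $\mathcal{K}_{\mathcal{D}_{\mathcal{A}}}(\mathbb{R}^n):=\{X\in\mathcal{K}(\mathbb{R}^n):X\cap\mathcal{D}_{\mathcal{A}}\neq\emptyset\}$. Let $\alpha:\mathbb{R}^n\to\mathbb{R}_+$ be continuous with $\underline{\alpha}\,\mathrm{dist}(x,\mathcal{A})^{\bar p}\le\alpha(x)\le\overline{\alpha}\,\mathrm{dist}(x,\mathcal{A})^{\bar p}$, constants $\underline{\alpha},\overline{\alpha}>0$, $\bar p\ge p$. Define $\Psi(X):=\inf_{y\in X}\alpha(y)$ and $\mathcal{V}(X):=\sum_{k=0}^\infty\Psi(\mathcal{R}(X,k))\in[0,\infty]$.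 *)

theory Defs
  imports "HOL-Analysis.Analysis"
begin

text \<open>A norm on R^n, given abstractly as a function (the paper allows any norm).\<close>
definition is_norm :: "(real^'n \<Rightarrow> real) \<Rightarrow> bool" where
  "is_norm N \<longleftrightarrow> (\<forall>x. N x = 0 \<longleftrightarrow> x = 0) \<and> (\<forall>x y. N (x + y) \<le> N x + N y)
     \<and> (\<forall>c x. N (c *\<^sub>R x) = \<bar>c\<bar> * N x)"

definition ndist :: "(real^'n \<Rightarrow> real) \<Rightarrow> real^'n \<Rightarrow> (real^'n) set \<Rightarrow> real" where
  "ndist N x \<Omega> = (INF y\<in>\<Omega>. N (x - y))"

definition Kset :: "('a::topological_space) set \<Rightarrow> bool" where
  "Kset X \<longleftrightarrow> compact X \<and> X \<noteq> {}"

definition Fimg :: "('x \<Rightarrow> 'u \<Rightarrow> 'x) \<Rightarrow> 'u set \<Rightarrow> 'x set \<Rightarrow> 'x set" where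
  "Fimg f U X = {f x u | x u. x \<in> X \<and> u \<in> U}"

fun traj :: "('x \<Rightarrow> 'u \<Rightarrow> 'x) \<Rightarrow> 'x \<Rightarrow> (nat \<Rightarrow> 'u) \<Rightarrow> nat \<Rightarrow> 'x" where
  "traj f x \<pi> 0 = x"
| "traj f x \<pi> (Suc k) = f (traj f x \<pi> k) (\<pi> k)"

definition Reach :: "('x \<Rightarrow> 'u \<Rightarrow> 'x) \<Rightarrow> 'u set \<Rightarrow> 'x set \<Rightarrow> nat \<Rightarrow> 'x set" where
  "Reach f U X k = {traj f x \<pi> k | x \<pi>. x \<in> X \<and> (\<forall>j. \<pi> j \<in> U)}"

definition controlled_invariant :: "('x \<Rightarrow> 'u \<Rightarrow> 'x) \<Rightarrow> 'u set \<Rightarrow> 'x set \<Rightarrow> bool" where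
  "controlled_invariant f U A \<longleftrightarrow> (\<forall>x\<in>A. \<exists>u\<in>U. f x u \<in> A)"

definition DomAttr :: "(real^'n \<Rightarrow> real) \<Rightarrow> (real^'n \<Rightarrow> 'u \<Rightarrow> real^'n) \<Rightarrow> 'u set
    \<Rightarrow> (real^'n) set \<Rightarrow> (real^'n) set" where
  "DomAttr N f U A = {x. \<exists>\<pi>. (\<forall>j. \<pi> j \<in> U) \<and> (\<lambda>k. ndist N (traj f x \<pi> k) A) \<longlonglongrightarrow> 0}"

definition Psi :: "('x \<Rightarrow> real) \<Rightarrow> 'x set \<Rightarrow> real" where
  "Psi \<alpha> X = (INF y\<in>X. \<alpha> y)"

definition Vcal :: "('x \<Rightarrow> real) \<Rightarrow> ('x \<Rightarrow> 'u \<Rightarrow> 'x) \<Rightarrow> 'u set \<Rightarrow> 'x set \<Rightarrow> ereal" where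
  "Vcal \<alpha> f U X = (\<Sum>k. ereal (Psi \<alpha> (Reach f U X k)))"

end

theory Submission
  imports Defs
begin

text \<open>Along the reachable sets the functional equation telescopes:
  \<open>v X = \<Sum>k<n. \<Psi>(\<R>(X,k)) + v(\<R>(X,n))\<close>, so \<open>v(\<R>(X,n)) \<rightarrow> 0\<close> makes \<open>v X\<close> the sum of the
  series defining \<open>\<V>(X)\<close>.\<close>

lemma traj_fun_upd_ge: "j \<ge> k \<Longrightarrow> traj f x (\<pi>(j := u)) k = traj f x \<pi> k"
  by (induction k) auto

lemma Reach_0: "U \<noteq> {} \<Longrightarrow> Reach f U X 0 = X"
  unfolding Reach_def by (auto intro!: exI[of _ "\<lambda>_. SOME u. u \<in> U"] some_in_eq[THEN iffD2])

lemma Reach_Suc: "Reach f U X (Suc k) = Fimg f U (Reach f U X k)"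
proof
  show "Reach f U X (Suc k) \<subseteq> Fimg f U (Reach f U X k)"
    unfolding Reach_def Fimg_def by force
next
  show "Fimg f U (Reach f U X k) \<subseteq> Reach f U X (Suc k)"
  proof
    fix z assume "z \<in> Fimg f U (Reach f U X k)"
    then obtain x \<pi> u where z: "z = f (traj f x \<pi> k) u" and "x \<in> X" "\<forall>j. \<pi> j \<in> U" "u \<in> U"
      unfolding Fimg_def Reach_def by blast
    moreover have "z = traj f x (\<pi>(k := u)) (Suc k)"
      using z traj_fun_upd_ge[of k k f x \<pi> u] by simp
    ultimately show "z \<in> Reach f U X (Suc k)"
      unfolding Reach_def by (force intro!: exI[of _ "\<pi>(k := u)"])
  qed
qed

lemma Kset_Fimg:
  assumes "continuous_on UNIV (\<lambda>(x, u). f x u)" "Kset U" "Kset X"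
  shows "Kset (Fimg f U X)"
proof -
  have "Fimg f U X = (\<lambda>(x, u). f x u) ` (X \<times> U)"
    unfolding Fimg_def by force
  moreover have "compact ((\<lambda>(x, u). f x u) ` (X \<times> U))"
    using assms by (intro compact_continuous_image continuous_on_subset[OF assms(1)])
      (auto simp: Kset_def compact_Times)
  ultimately show ?thesis
    using assms unfolding Kset_def by auto
qed

lemma Kset_Reach:
  assumes "continuous_on UNIV (\<lambda>(x, u). f x u)" "Kset U" "Kset X"
  shows "Kset (Reach f U X k)"
proof (induction k)
  case 0
  then show ?case using assms Reach_0[of U f X] unfolding Kset_def by auto
next
  case (Suc k)
  then show ?case using Kset_Fimg[OF assms(1,2)] by (simp add: Reach_Suc)
qed

lemma Bellman_solution_sums_Psi_Reach:
  assumes f_cont: "continuous_on UNIV (\<lambda>(x, u). f x u)"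
    and U_K: "Kset U" and X_K: "Kset X"
    and v_eq: "\<And>Y. Kset Y \<Longrightarrow> v Y = Psi \<alpha> Y + v (Fimg f U Y)"
    and v_lim: "(\<lambda>k. v (Reach f U X k)) \<longlonglongrightarrow> 0"
  shows "(\<lambda>k. Psi \<alpha> (Reach f U X k)) sums v X"
proof -
  have "Psi \<alpha> (Reach f U X k) = v (Reach f U X k) - v (Reach f U X (Suc k))" for k
    using v_eq[OF Kset_Reach[OF f_cont U_K X_K, of k]] by (simp add: Reach_Suc)
  moreover have "(\<lambda>k. v (Reach f U X k) - v (Reach f U X (Suc k))) sums (v X - 0)"
    using telescope_sums'[OF v_lim] U_K by (simp add: Reach_0 Kset_def)
  ultimately show ?thesis
    by simp
qed

theorem theorem13:
  fixes N :: "real^'n \<Rightarrow> real"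
    and f :: "real^'n \<Rightarrow> real^'m \<Rightarrow> real^'n"
    and U :: "(real^'m) set"
    and A :: "(real^'n) set"
    and r M p :: real
    and lam :: "real \<Rightarrow> nat \<Rightarrow> real"
    and \<alpha> :: "real^'n \<Rightarrow> real"
    and alo ahi pbar :: real
    and v :: "(real^'n) set \<Rightarrow> real"
  assumes norm: "is_norm N"
    and f_cont: "continuous_on UNIV (\<lambda>(x, u). f x u)"
    and U_K: "Kset U"
    and A_K: "Kset A"
    and A_inv: "controlled_invariant f U A"
    and r_pos: "r > 0" and M_ge: "M \<ge> 1" and p_pos: "p > 0"
    and lam_nonneg: "\<And>s k. s \<in> {0..r} \<Longrightarrow> lam s k \<ge> 0"
    and lam_cont: "\<And>k. continuous_on {0..r} (\<lambda>s. lam s k)"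
    and lam_mono: "\<And>k. mono_on {0..r} (\<lambda>s. lam s k)"
    and lam_zero: "\<And>k. lam 0 k = 0"
    and lam_antimono: "\<And>s. s \<in> {0..r} \<Longrightarrow> antimono (\<lambda>k. lam s k)"
    and lam_init: "\<And>s. s \<in> {0..r} \<Longrightarrow> lam s 0 \<le> s"
    and lam_summable: "summable (\<lambda>k. lam r k powr p)"
    and stab: "\<And>x. ndist N x A \<le> r \<Longrightarrow>
        \<exists>\<pi>. (\<forall>j. \<pi> j \<in> U) \<and> (\<forall>k. ndist N (traj f x \<pi> k) A \<le> M * lam (ndist N x A) k)"
    and \<alpha>_cont: "continuous_on UNIV \<alpha>"
    and \<alpha>_nonneg: "\<And>x. \<alpha> x \<ge> 0"
    and alo_pos: "alo > 0" and ahi_pos: "ahi > 0" and pbar_ge: "pbar \<ge> p"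
    and \<alpha>_lower: "\<And>x. alo * ndist N x A powr pbar \<le> \<alpha> x"
    and \<alpha>_upper: "\<And>x. \<alpha> x \<le> ahi * ndist N x A powr pbar"
    and v_eq: "\<And>X. Kset X \<Longrightarrow> v X = Psi \<alpha> X + v (Fimg f U X)"
    and v_lim: "\<And>X. Kset X \<Longrightarrow> X \<inter> DomAttr N f U A \<noteq> {} \<Longrightarrow>
        (\<lambda>k. v (Reach f U X k)) \<longlonglongrightarrow> 0"
  shows "\<forall>X. Kset X \<and> X \<inter> DomAttr N f U A \<noteq> {} \<longrightarrow> ereal (v X) = Vcal \<alpha> f U X"
proof (intro allI impI)
  fix X assume X: "Kset X \<and> X \<inter> DomAttr N f U A \<noteq> {}"
  then have "(\<lambda>k. Psi \<alpha> (Reach f U X k)) sums v X"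
    using Bellman_solution_sums_Psi_Reach[OF f_cont U_K _ v_eq v_lim] by blast
  then have "(\<lambda>k. ereal (Psi \<alpha> (Reach f U X k))) sums ereal (v X)"
    by (simp only: sums_ereal)
  then show "ereal (v X) = Vcal \<alpha> f U X"
    unfolding Vcal_def by (simp add: sums_unique)
qed

end
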